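(* Let $G$ be a symmetric finite discounted stochastic game, let $\epsilon \ge 0$, and let $\bm{\gamma} \in \bm{\Delta}$ be a joint stationary policy. If $i, j \in \mathcal{N}$ satisfy $\gamma^i = \gamma^j$, then $\gamma^i$ is an $\epsilon$-best-response to $\bm{\gamma}^{-i}$ if and only if $\gamma^j$ is an $\epsilon$-best-response to $\bm{\gamma}^{-j}$.
   Context: A finite discounted stochastic game is $G = (\mathcal{N}, \mathbb{X}, \{\mathbb{U}^i\}, \{c^i\}, \{\beta^i\}, P, \nu_0)$, with finite player set $\mathcal{N}$, finite state set $\mathbb{X}$, finite action sets $\mathbb{U}^i$, joint action set $\textbf{U}=\times_i\mathbb{U}^i$, stage costs $c^i:\mathbb{X}\times\textbf{U}\to\mathbb{R}$, discount factors $\beta^i\in[0,1)$, transition kernel $P(\cdot\mid x,\textbf{u})$ and initial distribution $\nu_0$. A stationary policy of player $i$ is a stochastic kernel $\gamma^i$ from $\mathbb{X}$ to $\mathbb{U}^i$ (actions $u^i_t\sim\gamma^i(\cdot\mid x_t)$, independently across players given the state); $\Delta^i$ is the set of these, $\bm{\Delta}=\times_i\Delta^i$, and $\bm{\gamma}^{-i}=(\gamma^k)_{k\neq i}$. Player $i$'s cost is $J^i_x(\bm{\gamma}) = E^{\bm{\gamma}}[\sum_{t\ge0}(\beta^i)^t c^i(x_t,\textbf{u}_t)\mid x_0=x]$. $\gamma^i$ is an $\epsilon$-best-response to $\bm{\gamma}^{-i}$ if $J^i_x(\gamma^i,\bm{\gamma}^{-i}) \le \inf_{\pi^i\in\Delta^i}J^i_x(\pi^i,\bm{\gamma}^{-i})+\epsilon$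 for all $x\in\mathbb{X}$. The game is symmetric if $\mathbb{U}^i=\mathbb{U}^j$, $\beta^i=\beta^j$ for all $i,j$, and for every permutation $\sigma$ of $\mathcal{N}$, every $i$, $x$ and joint action $\textbf{a}$: $c^i(x,\sigma(\textbf{a}))=c^{\sigma(i)}(x,\textbf{a})$ and $P(\cdot\mid x,\textbf{a})=P(\cdot\mid x,\sigma(\textbf{a}))$, where the $i$-th component of $\sigma(\textbf{a})$ is $a^{\sigma(i)}$. *)

theory Defs
  imports Complex_Main
begin

text \<open>Finite discounted stochastic game with player type 'n, state type 'x and common
  action type 'a (all finite).
  Stage costs c i x u, discount factors beta i, transition kernel P x u y = P(y | x,u).
  A stationary policy of a player is a kernel g x a = probability of action a in state x.
  Players randomize independently given the state.\<close>

definition stat_policies :: "('x::finite \<Rightarrow> 'a::finite \<Rightarrow> real) set" where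
  "stat_policies = {g. (\<forall>x a. 0 \<le> g x a) \<and> (\<forall>x. (\<Sum>a\<in>UNIV. g x a) = 1)}"

definition joint_policies :: "('n::finite \<Rightarrow> 'x::finite \<Rightarrow> 'a::finite \<Rightarrow> real) set" where
  "joint_policies = {\<gamma>. \<forall>i. \<gamma> i \<in> stat_policies}"

definition jprob :: "('n::finite \<Rightarrow> 'x \<Rightarrow> 'a \<Rightarrow> real) \<Rightarrow> 'x \<Rightarrow> ('n \<Rightarrow> 'a) \<Rightarrow> real" where
  "jprob \<gamma> x u = (\<Prod>i\<in>UNIV. \<gamma> i x (u i))"

fun state_dist :: "('x::finite \<Rightarrow> ('n::finite \<Rightarrow> 'a::finite) \<Rightarrow> 'x \<Rightarrow> real) \<Rightarrow>
    ('n \<Rightarrow> 'x \<Rightarrow> 'a \<Rightarrow> real) \<Rightarrow> 'x \<Rightarrow> nat \<Rightarrow> 'x \<Rightarrow> real" where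
  "state_dist P \<gamma> x0 0 y = (if y = x0 then 1 else 0)"
| "state_dist P \<gamma> x0 (Suc t) y =
     (\<Sum>z\<in>UNIV. state_dist P \<gamma> x0 t z * (\<Sum>u\<in>UNIV. jprob \<gamma> z u * P z u y))"

text \<open>J^i_x(gamma) = E[sum_t beta_i^t c_i(x_t,u_t) | x_0 = x], written out via the
  marginal distributions of (x_t,u_t) (linearity of expectation).\<close>
definition cost :: "('n::finite \<Rightarrow> 'x::finite \<Rightarrow> ('n \<Rightarrow> 'a::finite) \<Rightarrow> real) \<Rightarrow> ('n \<Rightarrow> real) \<Rightarrow>
    ('x \<Rightarrow> ('n \<Rightarrow> 'a) \<Rightarrow> 'x \<Rightarrow> real) \<Rightarrow> 'n \<Rightarrow> ('n \<Rightarrow> 'x \<Rightarrow> 'a \<Rightarrow> real) \<Rightarrow> 'x \<Rightarrow> real" where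
  "cost c \<beta> P i \<gamma> x =
     (\<Sum>t. \<beta> i ^ t * (\<Sum>z\<in>UNIV. state_dist P \<gamma> x t z *
                         (\<Sum>u\<in>UNIV. jprob \<gamma> z u * c i z u)))"

definition stochastic_game ::
  "('n::finite \<Rightarrow> 'x::finite \<Rightarrow> ('n \<Rightarrow> 'a::finite) \<Rightarrow> real) \<Rightarrow> ('n \<Rightarrow> real) \<Rightarrow>
   ('x \<Rightarrow> ('n \<Rightarrow> 'a) \<Rightarrow> 'x \<Rightarrow> real) \<Rightarrow> bool" where
  "stochastic_game c \<beta> P \<longleftrightarrow>
     (\<forall>i. 0 \<le> \<beta> i \<and> \<beta> i < 1) \<and>
     (\<forall>x u y. 0 \<le> P x u y) \<and> (\<forall>x u. (\<Sum>y\<in>UNIV. P x u y) = 1)"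

text \<open>Symmetry: common action sets (built in via the type 'a), equal discount factors,
  and invariance under every permutation sigma of the players, where
  sigma(a) has i-th component a (sigma i), i.e. sigma(a) = a o sigma.\<close>
definition symmetric_game ::
  "('n::finite \<Rightarrow> 'x::finite \<Rightarrow> ('n \<Rightarrow> 'a::finite) \<Rightarrow> real) \<Rightarrow> ('n \<Rightarrow> real) \<Rightarrow>
   ('x \<Rightarrow> ('n \<Rightarrow> 'a) \<Rightarrow> 'x \<Rightarrow> real) \<Rightarrow> bool" where
  "symmetric_game c \<beta> P \<longleftrightarrow>
     (\<forall>i j. \<beta> i = \<beta> j) \<and>
     (\<forall>\<sigma>. bij \<sigma> \<longrightarrow>
        (\<forall>i x a. c i x (a \<circ> \<sigma>) = c (\<sigma> i) x a) \<and>
        (\<forall>x a. P x a = P x (a \<circ> \<sigma>)))"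

definition eps_best_response ::
  "('n::finite \<Rightarrow> 'x::finite \<Rightarrow> ('n \<Rightarrow> 'a::finite) \<Rightarrow> real) \<Rightarrow> ('n \<Rightarrow> real) \<Rightarrow>
   ('x \<Rightarrow> ('n \<Rightarrow> 'a) \<Rightarrow> 'x \<Rightarrow> real) \<Rightarrow> real \<Rightarrow> 'n \<Rightarrow> ('n \<Rightarrow> 'x \<Rightarrow> 'a \<Rightarrow> real) \<Rightarrow> bool" where
  "eps_best_response c \<beta> P \<epsilon> i \<gamma> \<longleftrightarrow>
     (\<forall>x. cost c \<beta> P i \<gamma> x \<le>
          (INF \<pi>\<in>stat_policies. cost c \<beta> P i (\<gamma>(i := \<pi>)) x) + \<epsilon>)"

end

theory Submission
  imports Defs "HOL-Combinatorics.Transposition"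
begin

text \<open>Relabelling the players by a permutation \<open>\<sigma>\<close> maps the joint policy \<open>\<gamma>\<close> to
  \<open>\<gamma> \<circ> \<sigma>\<close> and joint actions \<open>u\<close> to \<open>u \<circ> \<sigma>\<close>. In a symmetric game the transition kernel
  does not see this relabelling and the cost of player \<open>i\<close> becomes that of \<open>\<sigma> i\<close>, so the
  state process is unchanged and player \<open>i\<close> under \<open>\<gamma> \<circ> \<sigma>\<close> faces exactly the problem of
  player \<open>\<sigma> i\<close> under \<open>\<gamma>\<close>. If \<open>\<gamma> i = \<gamma> j\<close>, the transposition of \<open>i\<close> and \<open>j\<close> fixes \<open>\<gamma>\<close>
  and turns the deviations of player \<open>i\<close> into those of player \<open>j\<close>.\<close>

lemma sum_comp_bij:
  fixes f :: "('n::finite \<Rightarrow> 'a::finite) \<Rightarrow> 'b::comm_monoid_add"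
  assumes "bij \<sigma>"
  shows "(\<Sum>u\<in>UNIV. f (u \<circ> \<sigma>)) = (\<Sum>u\<in>UNIV. f u)"
  by (rule sum.reindex_bij_witness[where i="\<lambda>u. u \<circ> inv \<sigma>" and j="\<lambda>u. u \<circ> \<sigma>"])
    (use assms in \<open>auto simp: comp_assoc bij_is_inj surj_iff[THEN iffD1, OF bij_is_surj]\<close>)

lemma jprob_comp_perm:
  assumes "bij \<sigma>"
  shows "jprob (\<gamma> \<circ> \<sigma>) z (u \<circ> \<sigma>) = jprob \<gamma> z u"
  unfolding jprob_def using prod.reindex_bij_betw[OF assms, of "\<lambda>k. \<gamma> k z (u k)"] by simp

lemma sum_jprob_comp_perm:
  fixes \<gamma> :: "'n::finite \<Rightarrow> 'x \<Rightarrow> 'a::finite \<Rightarrow> real"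
  assumes "bij \<sigma>"
  shows "(\<Sum>u\<in>UNIV. jprob (\<gamma> \<circ> \<sigma>) z u * f u) = (\<Sum>u\<in>UNIV. jprob \<gamma> z u * f (u \<circ> \<sigma>))"
proof -
  have "(\<Sum>u\<in>UNIV. jprob (\<gamma> \<circ> \<sigma>) z u * f u)
      = (\<Sum>u\<in>UNIV. jprob (\<gamma> \<circ> \<sigma>) z (u \<circ> \<sigma>) * f (u \<circ> \<sigma>))"
    using sum_comp_bij[OF assms, of "\<lambda>u. jprob (\<gamma> \<circ> \<sigma>) z u * f u"] by simp
  then show ?thesis
    by (simp add: jprob_comp_perm[OF assms])
qed

lemma state_dist_comp_perm:
  assumes "bij \<sigma>" and "\<And>x a. P x (a \<circ> \<sigma>) = P x a"
  shows "state_dist P (\<gamma> \<circ> \<sigma>) x0 t = state_dist P \<gamma> x0 t"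
proof (induction t)
  case 0
  show ?case by (simp add: fun_eq_iff)
next
  case (Suc t)
  have "(\<Sum>u\<in>UNIV. jprob (\<gamma> \<circ> \<sigma>) z u * P z u y) = (\<Sum>u\<in>UNIV. jprob \<gamma> z u * P z u y)"
    for z y
    by (simp add: sum_jprob_comp_perm[OF assms(1)] assms(2))
  with Suc.IH show ?case
    by (simp only: state_dist.simps)
qed

lemma cost_comp_perm:
  assumes "symmetric_game c \<beta> P" and "bij \<sigma>"
  shows "cost c \<beta> P i (\<gamma> \<circ> \<sigma>) x = cost c \<beta> P (\<sigma> i) \<gamma> x"
proof -
  from assms have "\<beta> (\<sigma> i) = \<beta> i" and "\<And>z a. c i z (a \<circ> \<sigma>) = c (\<sigma> i) z a"
    and "\<And>z a. P z (a \<circ> \<sigma>) = P z a"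
    unfolding symmetric_game_def by metis+
  then show ?thesis
    unfolding cost_def
    by (simp add: state_dist_comp_perm[OF assms(2)] sum_jprob_comp_perm[OF assms(2)])
qed

lemma eps_best_response_comp_perm:
  assumes "symmetric_game c \<beta> P" and "bij \<sigma>"
  shows "eps_best_response c \<beta> P \<epsilon> i (\<gamma> \<circ> \<sigma>) \<longleftrightarrow> eps_best_response c \<beta> P \<epsilon> (\<sigma> i) \<gamma>"
proof -
  have "(\<gamma> \<circ> \<sigma>)(i := \<pi>) = \<gamma>(\<sigma> i := \<pi>) \<circ> \<sigma>" for \<pi>
    using bij_is_inj[OF assms(2)] by (auto simp: fun_eq_iff inj_eq)
  then show ?thesis
    unfolding eps_best_response_def by (simp add: cost_comp_perm[OF assms])
qed

theorem lemma1:
  fixes c :: "'n::finite \<Rightarrow> 'x::finite \<Rightarrow> ('n \<Rightarrow> 'a::finite) \<Rightarrow> real"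
    and \<beta> :: "'n \<Rightarrow> real"
    and P :: "'x \<Rightarrow> ('n \<Rightarrow> 'a) \<Rightarrow> 'x \<Rightarrow> real"
    and \<epsilon> :: real
    and \<gamma> :: "'n \<Rightarrow> 'x \<Rightarrow> 'a \<Rightarrow> real"
    and i j :: 'n
  assumes "stochastic_game c \<beta> P"
    and "symmetric_game c \<beta> P"
    and "\<epsilon> \<ge> 0"
    and "\<gamma> \<in> joint_policies"
    and "\<gamma> i = \<gamma> j"
  shows "eps_best_response c \<beta> P \<epsilon> i \<gamma> \<longleftrightarrow> eps_best_response c \<beta> P \<epsilon> j \<gamma>"
proof -
  let ?\<sigma> = "transpose i j"
  have "\<gamma> \<circ> ?\<sigma> = \<gamma>"
    using assms(5) by (auto simp: fun_eq_iff transpose_def)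
  then show ?thesis
    using eps_best_response_comp_perm[OF assms(2) bij_transpose, of \<epsilon> i \<gamma> i j] by simp
qed

end
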